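(* Let $K$ be a field, $q\in K[x_1]\setminus K$, and let $F=\{f_1,\dots,f_s\}\subset R_q[\tilde{\bm{x}}]\setminus R_q$. For every $f\in R_q[\tilde{\bm{x}}]$ there exist a multiplier $\lambda\in R_q^\times$, a remainder $r\in R_q[\tilde{\bm{x}}]$ that is properly reduced with respect to $F$, and quotients $h_1,\dots,h_s\in R_q[\tilde{\bm{x}}]$ such that $$\lambda f=\sum_{j=1}^s h_jf_j+r$$ and $$\operatorname{lm}(f)=\max\Bigl\{\max_{1\le j\le s}\{\operatorname{lm}(h_j)\cdot\operatorname{lm}(f_j)\},\ \operatorname{lm}(r)\Bigr\}.$$
   Context: $R_q:=\{r\in K[x_1]:\deg r<\deg q\}$ with addition and multiplication modulo $q$, so $R_q\cong K[x_1]/(q)$; $R_q^\times$ is its group of units, $R_q^\ast=R_q\setminus\{0\}$. $\sigma_q:K[x_1]\to R_q$ sends $f$ to its remainder modulo $q$, and $\iota_q:R_q\hookrightarrow K[x_1]$ is the inclusion; both are extended coefficientwise to polynomials in $\tilde{\bm{x}}=(x_2,\dots,x_n)$. A monomial ordering $\succ$ on monomials in $\tilde{\bm{x}}$ is fixed; for nonzero $f\in R_q[\tilde{\bm{x}}]$, $\operatorname{lm}(f)$ is the $\succ$-largest monomial with nonzero coefficient and $\operatorname{lc}(f)$ that coefficient. Gcds in $K[x_1]$ are monic, $\operatorname{lcm}(a,b)=ab/\gcd(a,b)$. A nonzero term $c_\alpha\tilde{\bm{x}}^\alpha$ of a polynomial in $R_q[\tilde{\bm{x}}]$ is properly reducible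 with respect to $F$ if there is $f_j\in F$ with $\operatorname{lm}(f_j)\mid\tilde{\bm{x}}^\alpha$ such that the interim multiplier $\mu:=\sigma_q\bigl(\operatorname{lcm}(l_\alpha,l_j)/l_\alpha\bigr)$ lies in $R_q^\times$, where $l_\alpha=\iota_q(c_\alpha)$, $l_j=\iota_q(\operatorname{lc}(f_j))$. A polynomial is properly reduced with respect to $F$ if none of its terms is properly reducible (in particular $0$ is properly reduced). *)

theory Defs
  imports "HOL-Library.Poly_Mapping" "HOL-Computational_Algebra.Polynomial_Factorial"
begin

text \<open>Monomials in the variables x_2..x_n are exponent vectors of type 'v =>0 nat,
  with 'v a finite (nonempty) type of variables.  A polynomial in R_q[x~] is a finitely
  supported map from monomials to coefficients in K[x_1] (type 'a poly), each coefficient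
  being reduced modulo q (degree < degree q).\<close>

type_synonym ('v, 'a) mpoly = "('v \<Rightarrow>\<^sub>0 nat) \<Rightarrow>\<^sub>0 'a poly"

definition monomial_order :: "(('v \<Rightarrow>\<^sub>0 nat) \<Rightarrow> ('v \<Rightarrow>\<^sub>0 nat) \<Rightarrow> bool) \<Rightarrow> bool" where
  "monomial_order le \<longleftrightarrow>
     (\<forall>a. le a a) \<and> (\<forall>a b. le a b \<and> le b a \<longrightarrow> a = b) \<and>
     (\<forall>a b c. le a b \<and> le b c \<longrightarrow> le a c) \<and> (\<forall>a b. le a b \<or> le b a) \<and>
     (\<forall>a b c. le a b \<longrightarrow> le (a + c) (b + c)) \<and>
     wfP (\<lambda>a b. le a b \<and> a \<noteq> b)"

text \<open>Elements of R_q: polynomials r in K[x_1] with deg r < deg q, i.e. r mod q = r.\<close>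
definition in_Rq :: "'a::field_gcd poly \<Rightarrow> 'a poly \<Rightarrow> bool" where
  "in_Rq q r \<longleftrightarrow> r mod q = r"

definition Rq_unit :: "'a::field_gcd poly \<Rightarrow> 'a poly \<Rightarrow> bool" where
  "Rq_unit q u \<longleftrightarrow> in_Rq q u \<and> (\<exists>v. in_Rq q v \<and> (u * v) mod q = 1)"

definition sigma_q :: "'a::field_gcd poly \<Rightarrow> ('v, 'a) mpoly \<Rightarrow> ('v, 'a) mpoly" where
  "sigma_q q f = Poly_Mapping.map (\<lambda>c. c mod q) f"

definition in_Rq_poly :: "'a::field_gcd poly \<Rightarrow> ('v, 'a) mpoly \<Rightarrow> bool" where
  "in_Rq_poly q f \<longleftrightarrow> (\<forall>\<alpha>. in_Rq q (Poly_Mapping.lookup f \<alpha>))"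

definition Rq_mult :: "'a::field_gcd poly \<Rightarrow> ('v, 'a) mpoly \<Rightarrow> ('v, 'a) mpoly \<Rightarrow> ('v, 'a) mpoly" where
  "Rq_mult q f g = sigma_q q (f * g)"

definition Rq_add :: "'a::field_gcd poly \<Rightarrow> ('v, 'a) mpoly \<Rightarrow> ('v, 'a) mpoly \<Rightarrow> ('v, 'a) mpoly" where
  "Rq_add q f g = sigma_q q (f + g)"

definition Rq_scale :: "'a::field_gcd poly \<Rightarrow> 'a poly \<Rightarrow> ('v, 'a) mpoly \<Rightarrow> ('v, 'a) mpoly" where
  "Rq_scale q c f = sigma_q q (Poly_Mapping.map (\<lambda>d. c * d) f)"

definition lm :: "(('v \<Rightarrow>\<^sub>0 nat) \<Rightarrow> ('v \<Rightarrow>\<^sub>0 nat) \<Rightarrow> bool) \<Rightarrow> ('v, 'a::field_gcd) mpoly \<Rightarrow> ('v \<Rightarrow>\<^sub>0 nat)"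
  where "lm le f = (THE \<alpha>. \<alpha> \<in> Poly_Mapping.keys f \<and> (\<forall>\<beta>\<in>Poly_Mapping.keys f. le \<beta> \<alpha>))"

definition lc :: "(('v \<Rightarrow>\<^sub>0 nat) \<Rightarrow> ('v \<Rightarrow>\<^sub>0 nat) \<Rightarrow> bool) \<Rightarrow> ('v, 'a::field_gcd) mpoly \<Rightarrow> 'a poly"
  where "lc le f = Poly_Mapping.lookup f (lm le f)"

text \<open>lcm as in the paper: lcm(a,b) = ab / gcd(a,b), with gcd monic (Isabelle's gcd on K[x]).\<close>
definition lcm_paper :: "'a::field_gcd poly \<Rightarrow> 'a poly \<Rightarrow> 'a poly" where
  "lcm_paper a b = (a * b) div gcd a b"

definition mon_dvd :: "('v \<Rightarrow>\<^sub>0 nat) \<Rightarrow> ('v \<Rightarrow>\<^sub>0 nat) \<Rightarrow> bool" where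
  "mon_dvd \<beta> \<alpha> \<longleftrightarrow> (\<exists>\<gamma>. \<alpha> = \<beta> + \<gamma>)"

definition properly_reducible_term ::
  "'a::field_gcd poly \<Rightarrow> (('v \<Rightarrow>\<^sub>0 nat) \<Rightarrow> ('v \<Rightarrow>\<^sub>0 nat) \<Rightarrow> bool) \<Rightarrow> ('v, 'a) mpoly list
     \<Rightarrow> ('v, 'a) mpoly \<Rightarrow> ('v \<Rightarrow>\<^sub>0 nat) \<Rightarrow> bool" where
  "properly_reducible_term q le F g \<alpha> \<longleftrightarrow>
     Poly_Mapping.lookup g \<alpha> \<noteq> 0 \<and>
     (\<exists>fj \<in> set F. mon_dvd (lm le fj) \<alpha> \<and>
        Rq_unit q ((lcm_paper (Poly_Mapping.lookup g \<alpha>) (lc le fj) div Poly_Mapping.lookup g \<alpha>) mod q))"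

definition properly_reduced ::
  "'a::field_gcd poly \<Rightarrow> (('v \<Rightarrow>\<^sub>0 nat) \<Rightarrow> ('v \<Rightarrow>\<^sub>0 nat) \<Rightarrow> bool) \<Rightarrow> ('v, 'a) mpoly list
     \<Rightarrow> ('v, 'a) mpoly \<Rightarrow> bool" where
  "properly_reduced q le F g \<longleftrightarrow> (\<forall>\<alpha>. \<not> properly_reducible_term q le F g \<alpha>)"

end

theory Submission
  imports Defs
begin

(* Properly reducing the leading term c x^alpha of g by f_j never needs to scale g: with
   d = gcd(c, lc f_j) the interim multiplier is mu = lc f_j / d, and if mu is a unit of R_q then
   t = mu^-1 (c / d) satisfies t lc(f_j) = c in R_q, because (c / d) lc(f_j) = c mu.  So
   subtracting t x^gamma f_j cancels the leading term, and a term that is not properly reducible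
   is moved to the remainder; induction along the well-founded monomial order then yields the
   division with lambda = 1.  The leading monomial identity follows from the degree bounds
   alone: if lm f were none of the lm(h_j) lm(f_j) or lm r, its coefficient on the right-hand
   side would vanish. *)

lemma lookup_sigma_q: "Poly_Mapping.lookup (sigma_q q f) \<alpha> = Poly_Mapping.lookup f \<alpha> mod q"
  by (simp add: sigma_q_def map.rep_eq when_def)

lemma in_Rq_poly_sigma_q: "in_Rq_poly q (sigma_q q f)"
  by (simp add: in_Rq_poly_def in_Rq_def lookup_sigma_q)

lemma sigma_q_eq_self: "in_Rq_poly q f \<Longrightarrow> sigma_q q f = f"
  by (rule poly_mapping_eqI) (simp add: lookup_sigma_q in_Rq_poly_def in_Rq_def)

lemma sigma_q_zero [simp]: "sigma_q q 0 = 0"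
  by (rule poly_mapping_eqI) (simp add: lookup_sigma_q)

lemma sigma_q_add_sigma_q: "sigma_q q (sigma_q q f + g) = sigma_q q (f + g)"
  by (rule poly_mapping_eqI) (simp add: lookup_sigma_q lookup_add mod_add_left_eq)

lemma Rq_add_sum_Rq_mult:
  "Rq_add q (sigma_q q (\<Sum>j\<in>A. Rq_mult q (h j) (g j))) r = sigma_q q ((\<Sum>j\<in>A. h j * g j) + r)"
  by (rule poly_mapping_eqI)
    (simp add: Rq_add_def Rq_mult_def lookup_sigma_q lookup_add lookup_sum mod_add_left_eq mod_sum_eq)

lemma Rq_scale_one: "in_Rq_poly q f \<Longrightarrow> Rq_scale q 1 f = f"
  by (rule poly_mapping_eqI)
    (simp add: Rq_scale_def lookup_sigma_q map.rep_eq when_def in_Rq_poly_def in_Rq_def)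

lemma Rq_unit_one: "degree q > 0 \<Longrightarrow> Rq_unit q 1"
  by (auto simp: Rq_unit_def in_Rq_def intro!: exI[of _ 1] mod_poly_less)

lemma properly_reducible_term_cong:
  "Poly_Mapping.lookup g \<alpha> = Poly_Mapping.lookup g' \<alpha> \<Longrightarrow>
   properly_reducible_term q le F g \<alpha> = properly_reducible_term q le F g' \<alpha>"
  by (simp add: properly_reducible_term_def)

lemma properly_reduced_zero: "properly_reduced q le F 0"
  by (simp add: properly_reduced_def properly_reducible_term_def)

lemma lookup_single_mult:
  fixes p :: "'m::cancel_comm_monoid_add \<Rightarrow>\<^sub>0 'b::comm_semiring_1"
  shows "Poly_Mapping.lookup (Poly_Mapping.single \<gamma> t * p) (\<gamma> + \<beta>) = t * Poly_Mapping.lookup p \<beta>"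
proof -
  have "(\<lambda>\<delta>. Poly_Mapping.lookup p \<delta> when \<gamma> + \<beta> = \<gamma> + \<delta>) = (\<lambda>\<delta>. Poly_Mapping.lookup p \<delta> when \<delta> = \<beta>)"
    by (auto simp: when_def)
  then show ?thesis
    by (simp add: lookup_mult lookup_single when_mult)
qed

lemma interim_multiplier_unit_cancels:
  fixes c l q :: "'a::field_gcd poly"
  assumes "c \<noteq> 0" "in_Rq q c" "Rq_unit q ((lcm_paper c l div c) mod q)"
  shows "\<exists>t. in_Rq q t \<and> (t * l) mod q = c"
proof -
  define d where "d = gcd c l"
  have "d dvd c" "d dvd l"
    by (simp_all add: d_def)
  then have swap: "c div d * l = c * (l div d)"
    by (metis div_mult_swap mult.commute)
  have "lcm_paper c l = c * (l div d)"
    unfolding lcm_paper_def d_def[symmetric] using \<open>d dvd l\<close> by (simp add: div_mult_swap)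
  then obtain v where v: "((l div d) mod q * v) mod q = 1"
    using assms(1,3) by (auto simp: Rq_unit_def)
  have "((v * (c div d)) mod q * l) mod q = (v * (c div d * l)) mod q"
    by (simp add: mod_mult_left_eq mult.assoc)
  also have "\<dots> = (c * (l div d * v)) mod q"
    by (simp only: swap) (simp add: ac_simps)
  also have "\<dots> = (c * ((l div d) mod q * v)) mod q"
    by (metis mod_mult_left_eq mod_mult_right_eq)
  also have "\<dots> = c"
    using v assms(2) by (metis in_Rq_def mod_mult_right_eq mult.right_neutral)
  finally have "((v * (c div d)) mod q * l) mod q = c" .
  then show ?thesis
    by (intro exI[of _ "(v * (c div d)) mod q"]) (simp add: in_Rq_def)
qed

definition proper_division ::
  "'a::field_gcd poly \<Rightarrow> (('v \<Rightarrow>\<^sub>0 nat) \<Rightarrow> ('v \<Rightarrow>\<^sub>0 nat) \<Rightarrow> bool) \<Rightarrow> ('v, 'a) mpoly list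
     \<Rightarrow> ('v, 'a) mpoly \<Rightarrow> ('v, 'a) mpoly list \<Rightarrow> ('v, 'a) mpoly \<Rightarrow> bool" where
  "proper_division q le F g hs r \<longleftrightarrow>
     length hs = length F \<and> (\<forall>h\<in>set hs. in_Rq_poly q h) \<and>
     in_Rq_poly q r \<and> properly_reduced q le F r \<and>
     g = sigma_q q ((\<Sum>j<length F. hs ! j * F ! j) + r)"

definition division_terms_in ::
  "(('v \<Rightarrow>\<^sub>0 nat) \<Rightarrow> ('v \<Rightarrow>\<^sub>0 nat) \<Rightarrow> bool) \<Rightarrow> ('v, 'a::field_gcd) mpoly list
     \<Rightarrow> ('v, 'a) mpoly list \<Rightarrow> ('v, 'a) mpoly \<Rightarrow> ('v \<Rightarrow>\<^sub>0 nat) set \<Rightarrow> bool" where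
  "division_terms_in le F hs r A \<longleftrightarrow>
     (\<forall>j<length F. \<forall>\<beta>\<in>Poly_Mapping.keys (hs ! j). \<beta> + lm le (F ! j) \<in> A) \<and>
     Poly_Mapping.keys r \<subseteq> A"

definition division_support ::
  "(('v \<Rightarrow>\<^sub>0 nat) \<Rightarrow> ('v \<Rightarrow>\<^sub>0 nat) \<Rightarrow> bool) \<Rightarrow> ('v, 'a::field_gcd) mpoly list
     \<Rightarrow> ('v, 'a) mpoly list \<Rightarrow> ('v, 'a) mpoly \<Rightarrow> ('v \<Rightarrow>\<^sub>0 nat) set" where
  "division_support le F hs r =
     {lm le (hs ! j) + lm le (F ! j) | j. j < length F \<and> hs ! j \<noteq> 0}
     \<union> (if r = 0 then {} else {lm le r})"

lemma proper_division_zero: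
  "proper_division q le F 0 (replicate (length F) 0) 0 \<and>
   division_terms_in le F (replicate (length F) 0) 0 A"
  by (simp add: proper_division_def division_terms_in_def properly_reduced_zero
      in_Rq_poly_def in_Rq_def)

lemma division_terms_in_mono:
  "A \<subseteq> B \<Longrightarrow> division_terms_in le F hs r A \<Longrightarrow> division_terms_in le F hs r B"
  unfolding division_terms_in_def by blast

context
  fixes le :: "('v \<Rightarrow>\<^sub>0 nat) \<Rightarrow> ('v \<Rightarrow>\<^sub>0 nat) \<Rightarrow> bool"
  assumes mo: "monomial_order le"
begin

lemma monomial_order_refl: "le a a"
  using mo unfolding monomial_order_def by blast

lemma monomial_order_antisym: "le a b \<Longrightarrow> le b a \<Longrightarrow> a = b"
  using mo unfolding monomial_order_def by blast

lemma monomial_order_trans: "le a b \<Longrightarrow> le b c \<Longrightarrow> le a c"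
  using mo unfolding monomial_order_def by blast

lemma monomial_order_linear: "le a b \<or> le b a"
  using mo unfolding monomial_order_def by blast

lemma monomial_order_add_right: "le a b \<Longrightarrow> le (a + c) (b + c)"
  using mo unfolding monomial_order_def by blast

lemma monomial_order_add_mono: "le a b \<Longrightarrow> le c d \<Longrightarrow> le (a + c) (b + d)"
  using monomial_order_add_right[of a b c] monomial_order_add_right[of c d b] monomial_order_trans
  by (simp add: add.commute)

lemma monomial_order_wfp: "wfp (\<lambda>a b. le a b \<and> a \<noteq> b)"
  using mo unfolding monomial_order_def by blast

lemma monomial_order_le_less_trans: "le a b \<Longrightarrow> le b c \<Longrightarrow> b \<noteq> c \<Longrightarrow> le a c \<and> a \<noteq> c"
  using monomial_order_trans monomial_order_antisym by blast

lemma monomial_order_finite_has_greatest: "finite A \<Longrightarrow> A \<noteq> {} \<Longrightarrow> \<exists>a\<in>A. \<forall>b\<in>A. le b a"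
proof (induction A rule: finite_ne_induct)
  case (singleton x)
  then show ?case
    using monomial_order_refl by auto
next
  case (insert x A)
  then obtain a where a: "a \<in> A" "\<forall>b\<in>A. le b a"
    by auto
  show ?case
  proof (cases "le x a")
    case True
    then show ?thesis
      using a monomial_order_refl by auto
  next
    case False
    then have "le b x" if "b \<in> A" for b
      using that a monomial_order_linear monomial_order_trans by meson
    then show ?thesis
      using monomial_order_refl by auto
  qed
qed

lemma lm_eqI:
  assumes "a \<in> Poly_Mapping.keys g" "\<forall>b\<in>Poly_Mapping.keys g. le b a"
  shows "lm le g = a"
  unfolding lm_def
proof (rule the_equality)
  show "\<And>x. x \<in> Poly_Mapping.keys g \<and> (\<forall>b\<in>Poly_Mapping.keys g. le b x) \<Longrightarrow> x = a"
    using assms monomial_order_antisym by blast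
qed (use assms in blast)

lemma lm_greatest: "g \<noteq> 0 \<Longrightarrow> lm le g \<in> Poly_Mapping.keys g \<and> (\<forall>b\<in>Poly_Mapping.keys g. le b (lm le g))"
proof -
  assume "g \<noteq> 0"
  then obtain a where "a \<in> Poly_Mapping.keys g" "\<forall>b\<in>Poly_Mapping.keys g. le b a"
    using monomial_order_finite_has_greatest[of "Poly_Mapping.keys g"] by auto
  moreover from this have "lm le g = a"
    by (rule lm_eqI)
  ultimately show ?thesis
    by simp
qed

lemma lm_in_keys: "g \<noteq> 0 \<Longrightarrow> lm le g \<in> Poly_Mapping.keys g"
  using lm_greatest by blast

lemma le_lm: "\<beta> \<in> Poly_Mapping.keys g \<Longrightarrow> le \<beta> (lm le g)"
  using lm_greatest[of g] by (cases "g = 0") auto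

lemma le_lm_mult:
  assumes "\<beta> \<in> Poly_Mapping.keys (h * f)"
  shows "le \<beta> (lm le h + lm le f)"
proof -
  obtain a b where "a \<in> Poly_Mapping.keys h" "b \<in> Poly_Mapping.keys f" "\<beta> = a + b"
    using assms keys_mult[of h f] by blast
  then show ?thesis
    by (simp add: le_lm monomial_order_add_mono)
qed

lemma lm_single: "t \<noteq> 0 \<Longrightarrow> lm le (Poly_Mapping.single \<gamma> t) = \<gamma>"
  by (rule lm_eqI) (simp_all add: monomial_order_refl)

lemma division_support_le_lm:
  assumes "division_terms_in le F hs r {\<beta>. le \<beta> \<alpha>}" and "\<beta> \<in> division_support le F hs r"
  shows "le \<beta> \<alpha>"
proof -
  from assms(2) consider (quotient) j where "j < length F" "hs ! j \<noteq> 0" "\<beta> = lm le (hs ! j) + lm le (F ! j)"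
    | (remainder) "r \<noteq> 0" "\<beta> = lm le r"
    by (auto simp: division_support_def split: if_splits)
  then show ?thesis
    using assms(1) lm_in_keys by cases (auto simp: division_terms_in_def)
qed

lemma lm_in_division_support:
  assumes "g \<noteq> 0"
    and repr: "g = sigma_q q ((\<Sum>j<length F. hs ! j * F ! j) + r)"
    and terms: "division_terms_in le F hs r {\<beta>. le \<beta> (lm le g)}"
  shows "lm le g \<in> division_support le F hs r"
proof (rule ccontr)
  assume notin: "lm le g \<notin> division_support le F hs r"
  define \<alpha> where "\<alpha> = lm le g"
  have "Poly_Mapping.lookup (hs ! j * F ! j) \<alpha> = 0" if "j < length F" for j
  proof (cases "hs ! j = 0")
    case False
    have "le (lm le (hs ! j) + lm le (F ! j)) \<alpha>"
      using terms that lm_in_keys[OF False] by (auto simp: division_terms_in_def \<alpha>_def)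
    moreover have "lm le (hs ! j) + lm le (F ! j) \<noteq> \<alpha>"
      using notin that False by (auto simp: division_support_def \<alpha>_def)
    ultimately have "\<alpha> \<notin> Poly_Mapping.keys (hs ! j * F ! j)"
      using le_lm_mult monomial_order_antisym by blast
    then show ?thesis
      by (simp add: in_keys_iff)
  qed simp
  moreover have "Poly_Mapping.lookup r \<alpha> = 0"
  proof (cases "r = 0")
    case False
    have "le (lm le r) \<alpha>"
      using terms lm_in_keys[OF False] by (auto simp: division_terms_in_def \<alpha>_def)
    moreover have "lm le r \<noteq> \<alpha>"
      using notin False by (auto simp: division_support_def \<alpha>_def)
    ultimately have "\<alpha> \<notin> Poly_Mapping.keys r"
      using le_lm monomial_order_antisym by blast
    then show ?thesis
      by (simp add: in_keys_iff)
  qed simp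
  ultimately have "Poly_Mapping.lookup g \<alpha> = 0"
    by (subst repr) (simp add: lookup_sigma_q lookup_add lookup_sum)
  then show False
    using lm_in_keys[OF \<open>g \<noteq> 0\<close>] by (simp add: in_keys_iff \<alpha>_def)
qed

lemma keys_leading_term_reduction:
  assumes g: "in_Rq_poly q g" and lm_g: "lm le g = \<gamma> + lm le f"
    and t: "(t * lc le f) mod q = Poly_Mapping.lookup g (lm le g)"
  shows "Poly_Mapping.keys (sigma_q q (g - Poly_Mapping.single \<gamma> t * f))
           \<subseteq> {\<beta>. le \<beta> (lm le g) \<and> \<beta> \<noteq> lm le g}"
proof
  fix \<beta>
  assume \<beta>: "\<beta> \<in> Poly_Mapping.keys (sigma_q q (g - Poly_Mapping.single \<gamma> t * f))"
  have "le \<beta>' (lm le g)" if "\<beta>' \<in> Poly_Mapping.keys (Poly_Mapping.single \<gamma> t * f)" for \<beta>'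
  proof -
    have "t \<noteq> 0"
      using that by auto
    then show ?thesis
      using le_lm_mult[OF that] lm_single[OF \<open>t \<noteq> 0\<close>] lm_g by simp
  qed
  moreover have "\<beta> \<in> Poly_Mapping.keys g \<union> Poly_Mapping.keys (Poly_Mapping.single \<gamma> t * f)"
    using \<beta> by (auto simp: in_keys_iff lookup_sigma_q lookup_minus)
  ultimately have "le \<beta> (lm le g)"
    using le_lm by blast
  moreover have "Poly_Mapping.lookup (Poly_Mapping.single \<gamma> t * f) (lm le g) = t * lc le f"
    by (simp add: lm_g lookup_single_mult lc_def)
  then have "Poly_Mapping.lookup (sigma_q q (g - Poly_Mapping.single \<gamma> t * f)) (lm le g) = 0"
    using g t by (simp add: lookup_sigma_q lookup_minus in_Rq_poly_def in_Rq_def)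
      (metis mod_diff_eq diff_self mod_0)
  then have "\<beta> \<noteq> lm le g"
    using \<beta> by (auto simp: in_keys_iff)
  ultimately show "\<beta> \<in> {\<beta>. le \<beta> (lm le g) \<and> \<beta> \<noteq> lm le g}"
    by simp
qed

lemma proper_division_add_multiple:
  assumes div: "proper_division q le F g' hs r"
    and terms: "division_terms_in le F hs r {\<beta>. le \<beta> \<alpha> \<and> \<beta> \<noteq> \<alpha>}"
    and j: "j < length F" and t: "in_Rq q t" and \<gamma>: "\<gamma> + lm le (F ! j) = \<alpha>"
    and g: "g = sigma_q q (g' + Poly_Mapping.single \<gamma> t * F ! j)"
  defines "hs' \<equiv> hs[j := hs ! j + Poly_Mapping.single \<gamma> t]"
  shows "proper_division q le F g hs' r \<and> division_terms_in le F hs' r {\<beta>. le \<beta> \<alpha>}"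
proof -
  let ?s = "Poly_Mapping.single \<gamma> t"
  have "\<gamma> \<notin> Poly_Mapping.keys (hs ! j)"
    using terms j \<gamma> by (auto simp: division_terms_in_def)
  then have lookup_hj: "Poly_Mapping.lookup (hs ! j + ?s) \<beta> =
      (if \<beta> = \<gamma> then t else Poly_Mapping.lookup (hs ! j) \<beta>)" for \<beta>
    by (auto simp: lookup_add lookup_single when_def in_keys_iff)
  have len: "length hs = length F"
    using div by (simp add: proper_division_def)
  have "in_Rq_poly q (hs ! j + ?s)"
    using div j t len nth_mem[of j hs] by (auto simp: proper_division_def in_Rq_poly_def lookup_hj)
  then have quotients: "\<forall>h\<in>set hs'. in_Rq_poly q h"
    using div set_update_subset_insert[of hs j] by (auto simp: hs'_def proper_division_def)
  have "(\<Sum>i<length F. hs' ! i * F ! i) =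
      (\<Sum>i<length F. hs ! i * F ! i + (if i = j then ?s * F ! j else 0))"
    using len by (intro sum.cong) (auto simp: hs'_def distrib_right)
  also have "\<dots> = (\<Sum>i<length F. hs ! i * F ! i) + ?s * F ! j"
    using j by (simp add: sum.distrib)
  finally have sum: "(\<Sum>i<length F. hs' ! i * F ! i) = (\<Sum>i<length F. hs ! i * F ! i) + ?s * F ! j" .
  have "g = sigma_q q (sigma_q q ((\<Sum>i<length F. hs ! i * F ! i) + r) + ?s * F ! j)"
    using div g by (simp add: proper_division_def)
  also have "\<dots> = sigma_q q ((\<Sum>i<length F. hs' ! i * F ! i) + r)"
    unfolding sigma_q_add_sigma_q sum by (simp add: ac_simps)
  finally have "g = sigma_q q ((\<Sum>i<length F. hs' ! i * F ! i) + r)" .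
  moreover have "division_terms_in le F hs' r {\<beta>. le \<beta> \<alpha>}"
    unfolding division_terms_in_def
  proof (intro conjI allI impI ballI)
    fix i \<beta>
    assume i: "i < length F" and \<beta>: "\<beta> \<in> Poly_Mapping.keys (hs' ! i)"
    show "\<beta> + lm le (F ! i) \<in> {\<beta>. le \<beta> \<alpha>}"
    proof (cases "i = j \<and> \<beta> = \<gamma>")
      case True
      then show ?thesis
        using \<gamma> monomial_order_refl by simp
    next
      case False
      then have "\<beta> \<in> Poly_Mapping.keys (hs ! i)"
        using \<beta> i len by (cases "i = j") (auto simp: hs'_def in_keys_iff lookup_hj)
      then show ?thesis
        using terms i by (auto simp: division_terms_in_def)
    qed
  qed (use terms in \<open>auto simp: division_terms_in_def\<close>)
  ultimately show ?thesis
    using div quotients len by (simp add: proper_division_def hs'_def)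
qed

lemma proper_division_add_remainder_term:
  assumes g: "in_Rq_poly q g" and irreducible: "\<not> properly_reducible_term q le F g \<alpha>"
    and div: "proper_division q le F (g - Poly_Mapping.single \<alpha> (Poly_Mapping.lookup g \<alpha>)) hs r"
    and terms: "division_terms_in le F hs r {\<beta>. le \<beta> \<alpha> \<and> \<beta> \<noteq> \<alpha>}"
  defines "r' \<equiv> r + Poly_Mapping.single \<alpha> (Poly_Mapping.lookup g \<alpha>)"
  shows "proper_division q le F g hs r' \<and> division_terms_in le F hs r' {\<beta>. le \<beta> \<alpha>}"
proof -
  let ?s = "Poly_Mapping.single \<alpha> (Poly_Mapping.lookup g \<alpha>)"
  have "\<alpha> \<notin> Poly_Mapping.keys r"
    using terms by (auto simp: division_terms_in_def)
  then have lookup_r': "Poly_Mapping.lookup r' \<beta> =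
      (if \<beta> = \<alpha> then Poly_Mapping.lookup g \<alpha> else Poly_Mapping.lookup r \<beta>)" for \<beta>
    by (auto simp: r'_def lookup_add lookup_single when_def in_keys_iff)
  have "in_Rq_poly q r'"
    using div g by (simp add: proper_division_def in_Rq_poly_def lookup_r')
  have "properly_reduced q le F r'"
    unfolding properly_reduced_def
  proof
    fix \<beta>
    show "\<not> properly_reducible_term q le F r' \<beta>"
      using div irreducible properly_reducible_term_cong[of r' \<beta>] lookup_r'
      by (cases "\<beta> = \<alpha>") (auto simp: proper_division_def properly_reduced_def)
  qed
  have "g = sigma_q q ((g - ?s) + ?s)"
    using g by (simp add: sigma_q_eq_self)
  also have "\<dots> = sigma_q q (sigma_q q ((\<Sum>i<length F. hs ! i * F ! i) + r) + ?s)"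
    using div by (simp add: proper_division_def)
  also have "\<dots> = sigma_q q ((\<Sum>i<length F. hs ! i * F ! i) + r')"
    unfolding sigma_q_add_sigma_q r'_def by (simp add: ac_simps)
  finally have "g = sigma_q q ((\<Sum>i<length F. hs ! i * F ! i) + r')" .
  moreover have "division_terms_in le F hs r' {\<beta>. le \<beta> \<alpha>}"
    using terms monomial_order_refl
    by (auto simp: division_terms_in_def in_keys_iff lookup_r' split: if_splits)
  ultimately show ?thesis
    using div \<open>in_Rq_poly q r'\<close> \<open>properly_reduced q le F r'\<close> by (simp add: proper_division_def)
qed

lemma proper_division_exists:
  assumes "in_Rq_poly q g" "g \<noteq> 0"
  shows "\<exists>hs r. proper_division q le F g hs r \<and> division_terms_in le F hs r {\<beta>. le \<beta> (lm le g)}"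
  using assms
proof (induction "lm le g" arbitrary: g rule: wfp_induct_rule[OF monomial_order_wfp, case_names less])
  case (less g)
  define \<alpha> where "\<alpha> = lm le g"
  have below: "\<exists>hs r. proper_division q le F g' hs r \<and> division_terms_in le F hs r {\<beta>. le \<beta> \<alpha> \<and> \<beta> \<noteq> \<alpha>}"
    if g': "in_Rq_poly q g'" "Poly_Mapping.keys g' \<subseteq> {\<beta>. le \<beta> \<alpha> \<and> \<beta> \<noteq> \<alpha>}" for g'
  proof (cases "g' = 0")
    case True
    then show ?thesis
      using proper_division_zero by blast
  next
    case False
    then have lm_g': "le (lm le g') \<alpha> \<and> lm le g' \<noteq> \<alpha>"
      using g' lm_in_keys by blast
    then obtain hs r where "proper_division q le F g' hs r"
      and "division_terms_in le F hs r {\<beta>. le \<beta> (lm le g')}"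
      using less.hyps g'(1) False \<alpha>_def by blast
    moreover have "{\<beta>. le \<beta> (lm le g')} \<subseteq> {\<beta>. le \<beta> \<alpha> \<and> \<beta> \<noteq> \<alpha>}"
      using lm_g' monomial_order_le_less_trans by blast
    ultimately show ?thesis
      using division_terms_in_mono by blast
  qed
  show ?case
  proof (cases "properly_reducible_term q le F g \<alpha>")
    case True
    then obtain j \<gamma> where j: "j < length F" and \<gamma>: "\<gamma> + lm le (F ! j) = \<alpha>"
      and unit: "Rq_unit q ((lcm_paper (Poly_Mapping.lookup g \<alpha>) (lc le (F ! j))
                              div Poly_Mapping.lookup g \<alpha>) mod q)"
      by (auto simp: properly_reducible_term_def mon_dvd_def in_set_conv_nth add.commute)
    moreover have "Poly_Mapping.lookup g \<alpha> \<noteq> 0" "in_Rq q (Poly_Mapping.lookup g \<alpha>)"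
      using less.prems lm_in_keys by (simp_all add: \<alpha>_def in_keys_iff in_Rq_poly_def)
    ultimately obtain t where t: "in_Rq q t" "(t * lc le (F ! j)) mod q = Poly_Mapping.lookup g \<alpha>"
      using interim_multiplier_unit_cancels by blast
    define g' where "g' = sigma_q q (g - Poly_Mapping.single \<gamma> t * F ! j)"
    have "in_Rq_poly q g'"
      by (simp add: g'_def in_Rq_poly_sigma_q)
    moreover have "Poly_Mapping.keys g' \<subseteq> {\<beta>. le \<beta> \<alpha> \<and> \<beta> \<noteq> \<alpha>}"
      unfolding g'_def \<alpha>_def
      by (rule keys_leading_term_reduction[OF less.prems(1)]) (use t \<gamma> in \<open>simp_all add: \<alpha>_def\<close>)
    ultimately obtain hs r where div: "proper_division q le F g' hs r"
      and terms: "division_terms_in le F hs r {\<beta>. le \<beta> \<alpha> \<and> \<beta> \<noteq> \<alpha>}"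
      using below by blast
    have "g = sigma_q q (g' + Poly_Mapping.single \<gamma> t * F ! j)"
      using less.prems(1) by (simp add: g'_def sigma_q_add_sigma_q sigma_q_eq_self)
    from proper_division_add_multiple[OF div terms j t(1) \<gamma> this]
    show ?thesis
      unfolding \<alpha>_def by blast
  next
    case False
    define g' where "g' = g - Poly_Mapping.single \<alpha> (Poly_Mapping.lookup g \<alpha>)"
    have lookup_g': "Poly_Mapping.lookup g' \<beta> = (if \<beta> = \<alpha> then 0 else Poly_Mapping.lookup g \<beta>)" for \<beta>
      by (simp add: g'_def lookup_minus lookup_single when_def)
    have "in_Rq_poly q g'" "Poly_Mapping.keys g' \<subseteq> {\<beta>. le \<beta> \<alpha> \<and> \<beta> \<noteq> \<alpha>}"
      using less.prems(1) le_lm[of _ g]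
      by (auto simp: in_Rq_poly_def in_Rq_def in_keys_iff lookup_g' \<alpha>_def split: if_splits)
    then obtain hs r where div: "proper_division q le F g' hs r"
      and terms: "division_terms_in le F hs r {\<beta>. le \<beta> \<alpha> \<and> \<beta> \<noteq> \<alpha>}"
      using below by blast
    from proper_division_add_remainder_term[OF less.prems(1) False div[unfolded g'_def] terms]
    show ?thesis
      unfolding \<alpha>_def by blast
  qed
qed

end

theorem theorem5p3:
  fixes q :: "'a::field_gcd poly"
    and le :: "('v::finite \<Rightarrow>\<^sub>0 nat) \<Rightarrow> ('v \<Rightarrow>\<^sub>0 nat) \<Rightarrow> bool"
    and F :: "('v, 'a) mpoly list"
    and f :: "('v, 'a) mpoly"
  assumes "monomial_order le"
    and "degree q > 0"
    and "\<forall>fj \<in> set F. in_Rq_poly q fj \<and> \<not> Poly_Mapping.keys fj \<subseteq> {0}"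
    and "in_Rq_poly q f"
  shows "\<exists>lam r hs.
           Rq_unit q lam \<and> in_Rq_poly q r \<and> properly_reduced q le F r \<and>
           length hs = length F \<and> (\<forall>h \<in> set hs. in_Rq_poly q h) \<and>
           Rq_scale q lam f =
             Rq_add q (sigma_q q (\<Sum>j<length F. Rq_mult q (hs ! j) (F ! j))) r \<and>
           (f \<noteq> 0 \<longrightarrow>
              (let S = {lm le (hs ! j) + lm le (F ! j) | j. j < length F \<and> hs ! j \<noteq> 0}
                       \<union> (if r = 0 then {} else {lm le r})
               in lm le f \<in> S \<and> (\<forall>\<beta> \<in> S. le \<beta> (lm le f))))"
proof -
  obtain hs r where div: "proper_division q le F f hs r"
    and lm_f: "f \<noteq> 0 \<Longrightarrow>
      lm le f \<in> division_support le F hs r \<and> (\<forall>\<beta>\<in>division_support le F hs r. le \<beta> (lm le f))"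
  proof (cases "f = 0")
    case True
    then show ?thesis
      using that proper_division_zero by blast
  next
    case False
    then obtain hs r where div: "proper_division q le F f hs r"
      and terms: "division_terms_in le F hs r {\<beta>. le \<beta> (lm le f)}"
      using proper_division_exists[OF assms(1,4)] by blast
    have "lm le f \<in> division_support le F hs r"
      using div by (intro lm_in_division_support[OF assms(1) False _ terms]) (simp add: proper_division_def)
    then show ?thesis
      using that div division_support_le_lm[OF assms(1) terms] by blast
  qed
  have "Rq_scale q 1 f = f"
    using assms(4) by (rule Rq_scale_one)
  also have "\<dots> = sigma_q q ((\<Sum>j<length F. hs ! j * F ! j) + r)"
    using div by (simp add: proper_division_def)
  also have "\<dots> = Rq_add q (sigma_q q (\<Sum>j<length F. Rq_mult q (hs ! j) (F ! j))) r"
    by (rule Rq_add_sum_Rq_mult[symmetric])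
  finally show ?thesis
    using div lm_f Rq_unit_one[OF assms(2)]
    by (intro exI[of _ 1] exI[of _ r] exI[of _ hs]) (auto simp: proper_division_def division_support_def)
qed

end
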